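(* Let $\Gamma$ be a cocompact, discrete, torsion-free subgroup of $\mathrm{Isom}_+(\mathbb{H}^3)$ and let $\lambda>0$. Suppose that the family $\mathcal{Z}_\lambda(\Gamma)$ covers $\mathbb{H}^3$. Then the nerve $K_{\mathcal{Z}_\lambda(\Gamma)}$ is finite-dimensional.
   Context: For such $\Gamma$, every nontrivial element is loxodromic and lies in a unique maximal cyclic subgroup. Let $\mathcal{C}_\lambda(\Gamma)$ be the set of maximal cyclic subgroups $C$ of $\Gamma$ whose generator has translation length $<\lambda$. For $1\neq\gamma\in\Gamma$ let $Z_\lambda(\gamma)=\{\tilde P\in\mathbb{H}^3: d(\tilde P,\gamma\cdot\tilde P)<\lambda\}$, and for a maximal cyclic subgroup $C$ let $Z_\lambda(C)=\bigcup_{1\ne\gamma\in C}Z_\lambda(\gamma)$. Set $\mathcal{Z}_\lambda(\Gamma)=(Z_\lambda(C))_{C\in\mathcal{C}_\lambda(\Gamma)}$, an indexed family of open subsets of $\mathbb{H}^3$. For an indexed open covering $\mathcal{F}=(U_i)_{i\in I}$ of a space, the nerve $K_{\mathcal F}$ is the geometric realization of the abstract simplicial complex whose vertex set is $\{v_i: i\in I\}$ (a bijective copy of $I$) and whose simplices are the finite nonempty sets $\{v_{i_0},\dots,v_{i_d}\}$ with $U_{i_0}\cap\dots\cap U_{i_d}\neq\emptyset$ (distinct indices give distinct vertices even if the sets coincide). *)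

theory Defs
  imports "HOL-Analysis.Analysis"
begin

text \<open>Hyperboloid model of hyperbolic 3-space inside R^4 (coordinate 0 is the time coordinate).\<close>

definition mink :: "real^4 \<Rightarrow> real^4 \<Rightarrow> real" where
  "mink x y = - (x$0 * y$0) + x$1 * y$1 + x$2 * y$2 + x$3 * y$3"

definition H3 :: "(real^4) set" where
  "H3 = {x. mink x x = -1 \<and> x$0 > 0}"

definition hdist :: "real^4 \<Rightarrow> real^4 \<Rightarrow> real" where
  "hdist x y = arcosh (- mink x y)"

text \<open>Isom_+(H^3) = SO^+(3,1): Lorentz matrices preserving the upper sheet, of determinant 1.\<close>

definition Isom_plus :: "(real^4^4) set" where
  "Isom_plus = {A. (\<forall>x y. mink (A *v x) (A *v y) = mink x y) \<and> (\<lambda>x. A *v x) ` H3 \<subseteq> H3 \<and> det A = 1}"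

definition act :: "real^4^4 \<Rightarrow> real^4 \<Rightarrow> real^4" where
  "act A x = A *v x"

definition is_subgroup :: "(real^4^4) set \<Rightarrow> bool" where
  "is_subgroup G \<longleftrightarrow> G \<subseteq> Isom_plus \<and> mat 1 \<in> G \<and>
     (\<forall>a\<in>G. \<forall>b\<in>G. a ** b \<in> G) \<and> (\<forall>a\<in>G. matrix_inv a \<in> G)"

definition discrete_group :: "(real^4^4) set \<Rightarrow> bool" where
  "discrete_group G \<longleftrightarrow> (\<forall>g\<in>G. \<exists>e>0. \<forall>h\<in>G. dist h g < e \<longrightarrow> h = g)"

definition cocompact :: "(real^4^4) set \<Rightarrow> bool" where
  "cocompact G \<longleftrightarrow> (\<exists>K. compact K \<and> K \<subseteq> H3 \<and> (\<Union>g\<in>G. act g ` K) = H3)"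

definition mpow :: "real^4^4 \<Rightarrow> nat \<Rightarrow> real^4^4" where
  "mpow A n = ((\<lambda>B. A ** B) ^^ n) (mat 1)"

definition torsion_free :: "(real^4^4) set \<Rightarrow> bool" where
  "torsion_free G \<longleftrightarrow> (\<forall>g\<in>G. g \<noteq> mat 1 \<longrightarrow> (\<forall>n\<ge>1. mpow g n \<noteq> mat 1))"

definition zpow :: "real^4^4 \<Rightarrow> int \<Rightarrow> real^4^4" where
  "zpow A k = (if k \<ge> 0 then mpow A (nat k) else mpow (matrix_inv A) (nat (- k)))"

definition cyc :: "real^4^4 \<Rightarrow> (real^4^4) set" where
  "cyc g = range (zpow g)"

definition cyclic_subgroup_of :: "(real^4^4) set \<Rightarrow> (real^4^4) set \<Rightarrow> bool" where
  "cyclic_subgroup_of G C \<longleftrightarrow> (\<exists>g\<in>G. C = cyc g)"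

definition maximal_cyclic_subgroup :: "(real^4^4) set \<Rightarrow> (real^4^4) set \<Rightarrow> bool" where
  "maximal_cyclic_subgroup G C \<longleftrightarrow> cyclic_subgroup_of G C \<and>
     (\<forall>D. cyclic_subgroup_of G D \<and> C \<subseteq> D \<longrightarrow> D = C)"

definition transl_length :: "real^4^4 \<Rightarrow> real" where
  "transl_length g = Inf {hdist x (act g x) | x. x \<in> H3}"

definition short_cyclics :: "(real^4^4) set \<Rightarrow> real \<Rightarrow> (real^4^4) set set" where
  "short_cyclics G lam = {C. maximal_cyclic_subgroup G C \<and>
       (\<exists>g. C = cyc g \<and> transl_length g < lam)}"

definition Zel :: "real \<Rightarrow> real^4^4 \<Rightarrow> (real^4) set" where
  "Zel lam g = {x \<in> H3. hdist x (act g x) < lam}"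

definition Zcyc :: "real \<Rightarrow> (real^4^4) set \<Rightarrow> (real^4) set" where
  "Zcyc lam C = (\<Union>g\<in>C - {mat 1}. Zel lam g)"

definition nerve :: "('i \<Rightarrow> 'a set) \<Rightarrow> 'i set \<Rightarrow> 'i set set" where
  "nerve U I = {S. S \<subseteq> I \<and> finite S \<and> S \<noteq> {} \<and> (\<Inter>i\<in>S. U i) \<noteq> {}}"

text \<open>A simplicial complex (hence its geometric realization) is finite-dimensional iff the
  dimensions card S - 1 of its simplices are bounded.\<close>
definition finite_dimensional :: "'i set set \<Rightarrow> bool" where
  "finite_dimensional K \<longleftrightarrow> (\<exists>d::nat. \<forall>S\<in>K. card S \<le> d + 1)"

end

theory Submission
  imports Defs
begin

text \<open>
  The vertices of a simplex of the nerve are maximal cyclic subgroups \<open>C\<close> that all contain an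
  element moving one common point \<open>x\<close> by less than \<open>\<lambda>\<close>. Translating \<open>x\<close> by some \<open>h \<in> \<Gamma>\<close> into
  a compact set \<open>K\<close> whose translates cover \<open>H3\<close>, the conjugates \<open>h\<^sup>-\<^sup>1 C h\<close> are pairwise distinct and
  each contains one of the finitely many \<open>d \<in> \<Gamma>\<close> that move some point of \<open>K\<close> by at most \<open>\<lambda>\<close>
  (discreteness). So it suffices that a nontrivial \<open>d\<close> lies in only finitely many maximal cyclic
  subgroups, i.e. has finitely many roots. By cocompactness the displacement of \<open>d\<close> attains its
  minimum \<open>cosh \<ell>\<close> at some \<open>p\<close>, where \<open>d p + d\<^sup>-\<^sup>1 p = 2 cosh(\<ell>) p\<close>, and \<open>\<ell> > 0\<close> because a
  discrete torsion-free group acts freely. A root \<open>r\<close> of \<open>d\<close> commutes with \<open>d\<close>, so it preserves the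
  two light-like eigenlines of \<open>d\<close> in the plane of \<open>p\<close> and \<open>d p\<close>, with eigenvalues bounded by
  \<open>e\<^sup>\<ell>\<close>; this bounds \<open>r p\<close>, hence the entries of \<open>r\<close>, and discreteness leaves only finitely
  many roots.
\<close>

definition spatial_inner :: "real^4 \<Rightarrow> real^4 \<Rightarrow> real" where
  "spatial_inner x y = x$1*y$1 + x$2*y$2 + x$3*y$3"

lemma mink_eq_spatial_inner: "mink x y = -(x$0*y$0) + spatial_inner x y"
  by (simp add: mink_def spatial_inner_def)

lemma spatial_inner_Cauchy_Schwarz: "(spatial_inner x y)^2 \<le> spatial_inner x x * spatial_inner y y"
proof -
  have "spatial_inner x x * spatial_inner y y - (spatial_inner x y)^2 =
      (x$1*y$2 - x$2*y$1)^2 + (x$1*y$3 - x$3*y$1)^2 + (x$2*y$3 - x$3*y$2)^2"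
    by (simp add: spatial_inner_def power2_eq_square algebra_simps)
  moreover have "(x$1*y$2 - x$2*y$1)^2 + (x$1*y$3 - x$3*y$1)^2 + (x$2*y$3 - x$3*y$2)^2 \<ge> 0"
    by simp
  ultimately show ?thesis by linarith
qed

lemma spatial_inner_self_nonneg: "spatial_inner x x \<ge> 0"
  by (simp add: spatial_inner_def)

lemma abs_spatial_inner_le:
  "\<bar>spatial_inner x y\<bar> \<le> sqrt (spatial_inner x x) * sqrt (spatial_inner y y)"
proof -
  have "\<bar>spatial_inner x y\<bar> = sqrt ((spatial_inner x y)^2)" by simp
  also have "\<dots> \<le> sqrt (spatial_inner x x * spatial_inner y y)"
    using spatial_inner_Cauchy_Schwarz real_sqrt_le_mono by blast
  finally show ?thesis by (simp add: real_sqrt_mult)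
qed

lemma spatial_component_sq_le: "i = 1 \<or> i = 2 \<or> i = 3 \<Longrightarrow> (x$i)^2 \<le> spatial_inner x x"
  by (auto simp: spatial_inner_def power2_eq_square)

lemma spatial_inner_self_H3: "x \<in> H3 \<Longrightarrow> spatial_inner x x = (x$0)^2 - 1"
  by (simp add: H3_def mink_eq_spatial_inner power2_eq_square)

lemma H3_time_pos: "x \<in> H3 \<Longrightarrow> x$0 > 0"
  by (simp add: H3_def)

lemma H3_time_ge_1:
  assumes x: "x \<in> H3" shows "x$0 \<ge> 1"
proof (rule ccontr)
  assume "\<not> x$0 \<ge> 1"
  then have "x$0 * x$0 < 1 * 1" using H3_time_pos[OF x] by (intro mult_strict_mono) auto
  then show False
    using spatial_inner_self_H3[OF x] spatial_inner_self_nonneg[of x] by (simp add: power2_eq_square)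
qed

lemma minus_mink_H3_ge_1:
  assumes "u \<in> H3" "w \<in> H3" shows "- mink u w \<ge> 1"
proof -
  let ?a = "u$0" and ?b = "w$0"
  have a: "?a \<ge> 1" and b: "?b \<ge> 1" using assms H3_time_ge_1 by auto
  have "\<bar>spatial_inner u w\<bar> \<le> sqrt ((?a^2 - 1) * (?b^2 - 1))"
    using abs_spatial_inner_le[of u w] assms by (simp add: spatial_inner_self_H3 real_sqrt_mult)
  also have "\<dots> \<le> ?a * ?b - 1"
  proof (rule real_le_lsqrt)
    have "1 * 1 \<le> ?a * ?b" using a b by (intro mult_mono) auto
    then show "0 \<le> ?a * ?b - 1" by simp
    have "(?a - ?b)^2 \<ge> 0" by simp
    then show "(?a^2 - 1) * (?b^2 - 1) \<le> (?a * ?b - 1)^2"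
      by (simp add: power2_eq_square algebra_simps)
  qed
  finally show ?thesis by (simp add: mink_eq_spatial_inner)
qed

lemma minus_mink_ge_time_ratio:
  assumes u: "u \<in> H3" and w: "mink w w \<le> 0" "w$0 > 0"
  shows "- mink u w \<ge> w$0 / (2 * u$0)"
proof -
  define a where "a = u$0"
  define b where "b = w$0"
  define s where "s = sqrt (a^2 - 1)"
  have a: "a \<ge> 1" using u H3_time_ge_1 a_def by auto
  have b: "b > 0" using w b_def by auto
  have s0: "s \<ge> 0" and s2: "s^2 = a^2 - 1" using a by (simp_all add: s_def)
  have "sqrt (spatial_inner w w) \<le> b"
    using w(1) b unfolding b_def
    by (intro real_le_lsqrt) (auto simp: mink_eq_spatial_inner power2_eq_square)
  then have "s * sqrt (spatial_inner w w) \<le> s * b" using s0 by (rule mult_left_mono)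
  moreover have "sqrt (spatial_inner u u) = s" using u by (simp add: spatial_inner_self_H3 s_def a_def)
  ultimately have "\<bar>spatial_inner u w\<bar> \<le> s * b" using abs_spatial_inner_le[of u w] by simp
  then have lower: "- mink u w \<ge> (a - s) * b"
    by (simp add: mink_eq_spatial_inner a_def b_def algebra_simps)
  \<comment> \<open>\<open>a - s = 1 / (a + s) \<ge> 1 / (2 a)\<close>\<close>
  have "(a - s) * (a + s) = 1" using s2 by (simp add: power2_eq_square algebra_simps)
  moreover have sa: "s \<le> a" using s2 a power2_le_imp_le[of s a] by linarith
  then have "(a - s) * (a + s) \<le> (a - s) * (2 * a)" by (intro mult_left_mono) auto
  ultimately have "1 / (2 * a) \<le> a - s" using a by (simp add: divide_le_eq mult.commute)
  then have "b / (2 * a) \<le> (a - s) * b" using b mult_right_mono[of "1 / (2 * a)" "a - s" b] by simp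
  then show ?thesis using lower unfolding a_def b_def by linarith
qed

lemma exhaust_index4: fixes i :: 4 shows "i = 0 \<or> i = 1 \<or> i = 2 \<or> i = 3"
proof -
  have "(4::4) = 0" by simp
  then show ?thesis using exhaust_4[of i] by auto
qed

lemma mink_commute: "mink x y = mink y x" by (simp add: mink_def mult.commute)
lemma mink_add_left: "mink (x + y) z = mink x z + mink y z" by (simp add: mink_def algebra_simps)
lemma mink_add_right: "mink z (x + y) = mink z x + mink z y" by (simp add: mink_def algebra_simps)
lemma mink_diff_left: "mink (x - y) z = mink x z - mink y z" by (simp add: mink_def algebra_simps)
lemma mink_diff_right: "mink z (x - y) = mink z x - mink z y" by (simp add: mink_def algebra_simps)
lemma mink_scaleR_left: "mink (c *\<^sub>R x) z = c * mink x z" by (simp add: mink_def algebra_simps)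
lemma mink_scaleR_right: "mink z (c *\<^sub>R x) = c * mink z x" by (simp add: mink_def algebra_simps)
lemma mink_zero_left[simp]: "mink 0 z = 0" by (simp add: mink_def)
lemma mink_zero_right[simp]: "mink z 0 = 0" by (simp add: mink_def)

lemmas mink_bilinear = mink_add_left mink_add_right mink_diff_left mink_diff_right
  mink_scaleR_left mink_scaleR_right

lemma mink_nondegenerate:
  assumes "\<And>v. mink v w = 0" shows "w = 0"
proof -
  have "w$i = 0" for i
    using exhaust_index4[of i] assms[of "axis 0 1"] assms[of "axis 1 1"] assms[of "axis 2 1"]
      assms[of "axis 3 1"]
    by (auto simp: mink_def axis_def)
  then show ?thesis by (simp add: vec_eq_iff)
qed

definition hyp_origin :: "real^4" where "hyp_origin = axis 0 1"

lemma hyp_origin_in_H3: "hyp_origin \<in> H3"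
  by (simp add: hyp_origin_def H3_def mink_def axis_def)

lemma mink_hyp_origin: "mink x hyp_origin = - x$0"
  by (simp add: hyp_origin_def mink_def axis_def)

lemma matrix_vector_mult_axis_nth: "((A::real^4^4) *v axis j 1) $ i = A $ i $ j"
  by (simp add: matrix_vector_mult_basis column_def)

lemma Isom_plus_mink: "A \<in> Isom_plus \<Longrightarrow> mink (A *v x) (A *v y) = mink x y"
  by (simp add: Isom_plus_def)

lemma Isom_plus_H3: "A \<in> Isom_plus \<Longrightarrow> x \<in> H3 \<Longrightarrow> A *v x \<in> H3"
  by (auto simp: Isom_plus_def)

lemma Isom_plus_matrix_inv:
  assumes "A \<in> Isom_plus"
  shows "A ** matrix_inv A = mat 1" "matrix_inv A ** A = mat 1"
proof -
  have "invertible A" using assms by (simp add: Isom_plus_def invertible_det_nz)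
  then have "\<exists>A'. A ** A' = mat 1 \<and> A' ** A = mat 1" by (simp add: invertible_def)
  then have "A ** matrix_inv A = mat 1 \<and> matrix_inv A ** A = mat 1"
    unfolding matrix_inv_def by (rule someI_ex)
  then show "A ** matrix_inv A = mat 1" "matrix_inv A ** A = mat 1" by auto
qed

lemma Isom_plus_matrix_inv_vec:
  assumes "A \<in> Isom_plus"
  shows "A *v (matrix_inv A *v x) = x" "matrix_inv A *v (A *v x) = x"
  using Isom_plus_matrix_inv[OF assms] by (simp_all add: matrix_vector_mul_assoc)

lemma abs_le_if_sq_le: "(t::real)^2 \<le> c^2 \<Longrightarrow> c \<ge> 0 \<Longrightarrow> \<bar>t\<bar> \<le> c"
  using abs_le_square_iff by (metis abs_of_nonneg)

lemma H3_abs_le_time: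
  assumes u: "u \<in> H3" shows "\<bar>u$i\<bar> \<le> u$0"
proof -
  have "i = 0 \<or> (u$i)^2 \<le> (u$0)^2"
    using exhaust_index4[of i] spatial_component_sq_le[of i u] spatial_inner_self_H3[OF u] by auto
  then show ?thesis using H3_time_pos[OF u] abs_le_if_sq_le by fastforce
qed

lemma spacelike_unit_abs_le_time:
  assumes u: "u \<in> H3" and uv: "mink u v = 0" and vv: "mink v v = 1"
  shows "\<bar>v$i\<bar> \<le> u$0"
proof -
  define a where "a = u$0"
  define t where "t = v$0"
  have a: "a > 0" using H3_time_pos[OF u] by (simp add: a_def)
  have spv: "spatial_inner v v = 1 + t^2" using vv by (simp add: mink_eq_spatial_inner t_def power2_eq_square)
  have "(a * t)^2 \<le> (a^2 - 1) * (1 + t^2)"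
    using spatial_inner_Cauchy_Schwarz[of u v] uv spv spatial_inner_self_H3[OF u]
    by (simp add: mink_eq_spatial_inner a_def t_def)
  then have t: "t^2 \<le> a^2 - 1" by (simp add: power_mult_distrib algebra_simps)
  have "i = 0 \<or> (v$i)^2 \<le> 1 + t^2"
    using exhaust_index4[of i] spatial_component_sq_le[of i v] spv by auto
  then have "(v$i)^2 \<le> a^2" using t by (auto simp: t_def)
  then show ?thesis using abs_le_if_sq_le a by (simp add: a_def)
qed

text \<open>The columns of a Lorentz matrix form a Lorentz-orthonormal frame: column \<open>0\<close> lies on \<open>H3\<close>
  and the others are spacelike unit vectors orthogonal to it.\<close>

lemma Isom_plus_abs_entry_le:
  assumes A: "A \<in> Isom_plus" shows "\<bar>A$i$j\<bar> \<le> A$0$0"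
proof -
  define c where "c = (\<lambda>j. A *v axis j 1)"
  have c_nth: "c j $ i = A$i$j" for i j by (simp add: c_def matrix_vector_mult_axis_nth)
  have c_mink: "mink (c j) (c k) = mink (axis j 1) (axis k 1)" for j k
    using Isom_plus_mink[OF A] by (simp add: c_def)
  have c0: "c 0 \<in> H3" using Isom_plus_H3[OF A hyp_origin_in_H3] by (simp add: c_def hyp_origin_def)
  show ?thesis
  proof (cases "j = 0")
    case True then show ?thesis using H3_abs_le_time[OF c0, of i] by (simp add: c_nth)
  next
    case False
    then have "mink (c 0) (c j) = 0" "mink (c j) (c j) = 1"
      using exhaust_index4[of j] c_mink[of 0 j] c_mink[of j j] by (auto simp: mink_def axis_def)
    then show ?thesis using spacelike_unit_abs_le_time[OF c0, of "c j" i] by (simp add: c_nth)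
  qed
qed

lemma Isom_plus_corner_le:
  assumes A: "A \<in> Isom_plus" and k: "k \<in> H3"
  shows "A$0$0 \<le> 2 * k$0 * (A *v k)$0"
proof -
  define y where "y = A *v k"
  define c where "c = A *v hyp_origin"
  have y: "y \<in> H3" using Isom_plus_H3[OF A k] by (simp add: y_def)
  have c: "c \<in> H3" using Isom_plus_H3[OF A hyp_origin_in_H3] by (simp add: c_def)
  have "mink y c = - k$0"
    using Isom_plus_mink[OF A] mink_hyp_origin[of k] by (simp add: y_def c_def)
  moreover have "c$0 = A$0$0" by (simp add: c_def hyp_origin_def matrix_vector_mult_axis_nth)
  moreover have "- mink y c \<ge> c$0 / (2 * y$0)"
    using minus_mink_ge_time_ratio[OF y, of c] c by (simp add: H3_def)
  ultimately show ?thesis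
    using H3_time_pos[OF y] by (simp add: y_def divide_le_eq mult.commute mult.left_commute)
qed

lemma Isom_plus_matrix_inv_corner:
  assumes A: "A \<in> Isom_plus" shows "(matrix_inv A)$0$0 = A$0$0"
proof -
  have "mink hyp_origin (matrix_inv A *v hyp_origin) =
      mink (A *v hyp_origin) (A *v (matrix_inv A *v hyp_origin))"
    using Isom_plus_mink[OF A] by simp
  also have "\<dots> = mink (A *v hyp_origin) hyp_origin" using Isom_plus_matrix_inv_vec[OF A] by simp
  finally have "mink (matrix_inv A *v hyp_origin) hyp_origin = mink (A *v hyp_origin) hyp_origin"
    by (simp add: mink_commute)
  then show ?thesis unfolding mink_hyp_origin by (simp add: hyp_origin_def matrix_vector_mult_axis_nth)
qed

lemma norm_matrix_le_entry_bound:
  fixes A :: "real^4^4"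
  assumes "\<And>i j. \<bar>A$i$j\<bar> \<le> c"
  shows "norm A \<le> 16 * c"
proof -
  have "norm A \<le> (\<Sum>i\<in>UNIV. norm (A$i))" by (simp add: norm_vec_def L2_set_le_sum)
  also have "\<dots> \<le> (\<Sum>i\<in>(UNIV::4 set). 4 * c)"
  proof (rule sum_mono)
    fix i
    have "norm (A$i) \<le> (\<Sum>j\<in>UNIV. \<bar>A$i$j\<bar>)" by (rule norm_le_l1_cart)
    also have "\<dots> \<le> (\<Sum>j\<in>(UNIV::4 set). c)" using assms by (intro sum_mono) auto
    finally show "norm (A$i) \<le> 4 * c" by simp
  qed
  finally show ?thesis by simp
qed

lemma Isom_plus_norm_le: "A \<in> Isom_plus \<Longrightarrow> norm A \<le> 16 * A$0$0"
  by (intro norm_matrix_le_entry_bound Isom_plus_abs_entry_le)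

lemma matrix_mult_diff_distrib_left:
  "(A::'a::ring_1^'n^'m) ** (B - C) = A ** B - A ** C"
  using matrix_add_ldistrib[of A "B - C" C] by (simp add: algebra_simps)

lemma norm_matrix_inv_mult_minus_one_le:
  assumes h: "h \<in> Isom_plus" and hi: "matrix_inv h \<in> Isom_plus"
  shows "norm (matrix_inv h ** g - mat 1) \<le> 64 * h$0$0 * norm (g - h)"
proof -
  have "matrix_inv h ** g - mat 1 = matrix_inv h ** (g - h)"
    using Isom_plus_matrix_inv(2)[OF h] by (simp add: matrix_mult_diff_distrib_left)
  moreover have "\<bar>(matrix_inv h ** (g - h))$i$j\<bar> \<le> 4 * (h$0$0 * norm (g - h))" for i j
  proof -
    have "\<bar>(matrix_inv h ** (g - h))$i$j\<bar> \<le> (\<Sum>k\<in>UNIV. \<bar>matrix_inv h $i$k\<bar> * \<bar>(g - h)$k$j\<bar>)"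
      unfolding matrix_matrix_mult_def by (simp add: abs_mult[symmetric] sum_abs)
    also have "\<dots> \<le> (\<Sum>k\<in>(UNIV::4 set). h$0$0 * norm (g - h))"
    proof (rule sum_mono)
      fix k
      have "\<bar>matrix_inv h $i$k\<bar> \<le> h$0$0"
        using Isom_plus_abs_entry_le[OF hi] Isom_plus_matrix_inv_corner[OF h] by simp
      moreover have "\<bar>(g - h)$k$j\<bar> \<le> norm (g - h)"
        using component_le_norm_cart Finite_Cartesian_Product.norm_nth_le order_trans by blast
      ultimately show "\<bar>matrix_inv h $i$k\<bar> * \<bar>(g - h)$k$j\<bar> \<le> h$0$0 * norm (g - h)"
        by (intro mult_mono) auto
    qed
    finally show ?thesis by simp
  qed
  ultimately show ?thesis using norm_matrix_le_entry_bound by fastforce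
qed

lemma subgroup_Isom_plus: "is_subgroup G \<Longrightarrow> g \<in> G \<Longrightarrow> g \<in> Isom_plus"
  by (auto simp: is_subgroup_def)
lemma subgroup_mult: "is_subgroup G \<Longrightarrow> g \<in> G \<Longrightarrow> h \<in> G \<Longrightarrow> g ** h \<in> G"
  by (auto simp: is_subgroup_def)
lemma subgroup_matrix_inv: "is_subgroup G \<Longrightarrow> g \<in> G \<Longrightarrow> matrix_inv g \<in> G"
  by (auto simp: is_subgroup_def)
lemma subgroup_one: "is_subgroup G \<Longrightarrow> mat 1 \<in> G"
  by (auto simp: is_subgroup_def)

text \<open>\<open>h\<^sup>-\<^sup>1 g \<noteq> 1\<close> stays away from the identity, and \<open>h\<^sup>-\<^sup>1 g - 1 = h\<^sup>-\<^sup>1 (g - h)\<close>.\<close>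

lemma discrete_subgroup_separated:
  assumes G: "is_subgroup G" and D: "discrete_group G"
  obtains e where "e > 0" "\<And>g h. g \<in> G \<Longrightarrow> h \<in> G \<Longrightarrow> g \<noteq> h \<Longrightarrow> e \<le> 64 * h$0$0 * dist g h"
proof -
  obtain e where e: "e > 0" "\<And>h. h \<in> G \<Longrightarrow> dist h (mat 1) < e \<Longrightarrow> h = mat 1"
    using D subgroup_one[OF G] unfolding discrete_group_def by blast
  have "e \<le> 64 * h$0$0 * dist g h" if gh: "g \<in> G" "h \<in> G" "g \<noteq> h" for g h
  proof -
    have hI: "h \<in> Isom_plus" "matrix_inv h \<in> Isom_plus"
      using gh(2) subgroup_Isom_plus[OF G] subgroup_matrix_inv[OF G] by auto
    have "h ** (matrix_inv h ** g) = g"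
      using Isom_plus_matrix_inv(1)[OF hI(1)] by (simp add: matrix_mul_assoc)
    then have "matrix_inv h ** g \<noteq> mat 1" using gh(3) by auto
    moreover have "matrix_inv h ** g \<in> G"
      using gh subgroup_mult[OF G] subgroup_matrix_inv[OF G] by blast
    ultimately have "\<not> dist (matrix_inv h ** g) (mat 1) < e" using e(2) by blast
    then have "e \<le> norm (matrix_inv h ** g - mat 1)" by (simp add: dist_norm)
    also have "\<dots> \<le> 64 * h$0$0 * norm (g - h)" using norm_matrix_inv_mult_minus_one_le[OF hI] .
    finally show ?thesis by (simp add: dist_norm)
  qed
  then show ?thesis using that e(1) by blast
qed

lemma finite_if_corner_bounded:
  assumes G: "is_subgroup G" and D: "discrete_group G"
    and S: "S \<subseteq> G" and B: "\<And>A. A \<in> S \<Longrightarrow> A$0$0 \<le> M"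
  shows "finite S"
proof -
  have Isom: "A \<in> Isom_plus" if "A \<in> S" for A using that S subgroup_Isom_plus[OF G] by auto
  obtain e where e: "e > 0" "\<And>g h. g \<in> G \<Longrightarrow> h \<in> G \<Longrightarrow> g \<noteq> h \<Longrightarrow> e \<le> 64 * h$0$0 * dist g h"
    using discrete_subgroup_separated[OF G D] by blast
  have "dist g h \<ge> e / (64 * (\<bar>M\<bar> + 1))" if "g \<in> S" "h \<in> S" "g \<noteq> h" for g h
  proof -
    have "e \<le> 64 * h$0$0 * dist g h" using e(2) that S by blast
    also have "\<dots> \<le> 64 * (\<bar>M\<bar> + 1) * dist g h" using B[OF that(2)] by (simp add: mult_right_mono)
    finally show ?thesis by (simp add: divide_le_eq add_nonneg_pos mult.commute)
  qed
  then have "uniform_discrete S"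
    unfolding uniform_discrete_def using e(1)
    by (intro exI[of _ "e / (64 * (\<bar>M\<bar> + 1))"]) (force simp: add_nonneg_pos)
  moreover have "S \<subseteq> cball 0 (16 * M)"
    using Isom_plus_norm_le Isom B by (force simp: mem_cball_0 intro: order_trans)
  ultimately show ?thesis using uniform_discrete_finite_iff bounded_cball bounded_subset by blast
qed

lemma mpow_0[simp]: "mpow A 0 = mat 1" by (simp add: mpow_def)
lemma mpow_Suc: "mpow A (Suc n) = A ** mpow A n" by (simp add: mpow_def)

lemma mpow_add: "mpow A (m + n) = mpow A m ** mpow A n"
  by (induction m) (simp_all add: mpow_Suc matrix_mul_assoc)

lemma mpow_commute: "A ** mpow A n = mpow A n ** A"
  using mpow_add[of A n 1] by (simp add: mpow_Suc)

lemma mpow_in_subgroup: "is_subgroup G \<Longrightarrow> g \<in> G \<Longrightarrow> mpow g n \<in> G"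
  by (induction n) (simp_all add: mpow_Suc subgroup_one subgroup_mult)

lemma mpow_fixed_point: "g *v p = p \<Longrightarrow> mpow g n *v p = p"
  by (induction n) (simp_all add: mpow_Suc matrix_vector_mul_assoc[symmetric])

lemma mpow_eigenvector: "r *v v = \<beta> *\<^sub>R v \<Longrightarrow> mpow r k *v v = (\<beta> ^ k) *\<^sub>R v"
  by (induction k) (simp_all add: mpow_Suc matrix_vector_mul_assoc[symmetric] matrix_vector_mult_scaleR)

lemma Isom_plus_matrix_inv_unique: "A \<in> Isom_plus \<Longrightarrow> A ** B = mat 1 \<Longrightarrow> matrix_inv A = B"
  by (metis Isom_plus_matrix_inv(2) matrix_mul_assoc matrix_mul_lid matrix_mul_rid)

lemma subgroup_matrix_inv_matrix_inv:
  assumes G: "is_subgroup G" and g: "g \<in> G" shows "matrix_inv (matrix_inv g) = g"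
  using Isom_plus_matrix_inv_unique[OF subgroup_Isom_plus[OF G subgroup_matrix_inv[OF G g]]]
    Isom_plus_matrix_inv(2)[OF subgroup_Isom_plus[OF G g]] .

definition conj_by :: "real^4^4 \<Rightarrow> real^4^4 \<Rightarrow> real^4^4" where
  "conj_by h x = matrix_inv h ** x ** h"

context
  fixes G h
  assumes G: "is_subgroup G" and h: "h \<in> G"
begin

lemma conj_by_in_subgroup: "x \<in> G \<Longrightarrow> conj_by h x \<in> G"
  using G h by (simp add: conj_by_def subgroup_mult subgroup_matrix_inv)

lemma conj_by_mult: "conj_by h x ** conj_by h y = conj_by h (x ** y)"
proof -
  have "conj_by h x ** conj_by h y = matrix_inv h ** x ** (h ** matrix_inv h) ** y ** h"
    by (simp add: conj_by_def matrix_mul_assoc)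
  then show ?thesis using Isom_plus_matrix_inv(1)[OF subgroup_Isom_plus[OF G h]]
    by (simp add: conj_by_def matrix_mul_assoc)
qed

lemma conj_by_one: "conj_by h (mat 1) = mat 1"
  using Isom_plus_matrix_inv(2)[OF subgroup_Isom_plus[OF G h]] by (simp add: conj_by_def)

lemma conj_by_mpow: "mpow (conj_by h x) n = conj_by h (mpow x n)"
  by (induction n) (simp_all add: mpow_Suc conj_by_one conj_by_mult)

lemma conj_by_matrix_inv:
  assumes x: "x \<in> G" shows "matrix_inv (conj_by h x) = conj_by h (matrix_inv x)"
proof (rule Isom_plus_matrix_inv_unique)
  show "conj_by h x \<in> Isom_plus" using subgroup_Isom_plus[OF G conj_by_in_subgroup[OF x]] .
  show "conj_by h x ** conj_by h (matrix_inv x) = mat 1"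
    using conj_by_mult Isom_plus_matrix_inv(1)[OF subgroup_Isom_plus[OF G x]] conj_by_one by simp
qed

lemma conj_by_cyc: "x \<in> G \<Longrightarrow> cyc (conj_by h x) = conj_by h ` cyc x"
  by (auto simp: cyc_def zpow_def conj_by_mpow conj_by_matrix_inv)

lemma conj_by_inverse_cancel: "conj_by (matrix_inv h) (conj_by h x) = x"
proof -
  have "conj_by (matrix_inv h) (conj_by h x) = (h ** matrix_inv h) ** x ** (h ** matrix_inv h)"
    by (simp add: conj_by_def subgroup_matrix_inv_matrix_inv[OF G h] matrix_mul_assoc)
  then show ?thesis using Isom_plus_matrix_inv(1)[OF subgroup_Isom_plus[OF G h]] by simp
qed

lemma inj_conj_by: "inj (conj_by h)"
  by (metis conj_by_inverse_cancel injI)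

lemma mink_conj_by:
  "mink (h *v x) (g *v (h *v x)) = mink x (conj_by h g *v x)"
proof -
  have hI: "h \<in> Isom_plus" using subgroup_Isom_plus[OF G h] .
  have "conj_by h g *v x = matrix_inv h *v (g *v (h *v x))"
    by (simp add: conj_by_def matrix_vector_mul_assoc matrix_mul_assoc)
  then have "mink x (conj_by h g *v x) = mink (h *v x) (h *v (matrix_inv h *v (g *v (h *v x))))"
    using Isom_plus_mink[OF hI] by simp
  then show ?thesis using Isom_plus_matrix_inv_vec[OF hI] by simp
qed

end

lemma conj_by_cancel_inverse:
  assumes G: "is_subgroup G" and h: "h \<in> G" shows "conj_by h (conj_by (matrix_inv h) x) = x"
  using conj_by_inverse_cancel[OF G subgroup_matrix_inv[OF G h]] subgroup_matrix_inv_matrix_inv[OF G h]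
  by simp

lemma zpow_in_subgroup: "is_subgroup G \<Longrightarrow> g \<in> G \<Longrightarrow> zpow g k \<in> G"
  by (simp add: zpow_def mpow_in_subgroup subgroup_matrix_inv)

lemma cyclic_subgroup_subset: "is_subgroup G \<Longrightarrow> cyclic_subgroup_of G C \<Longrightarrow> C \<subseteq> G"
  by (auto simp: cyclic_subgroup_of_def cyc_def zpow_in_subgroup)

lemma maximal_cyclic_subgroup_subset: "is_subgroup G \<Longrightarrow> maximal_cyclic_subgroup G C \<Longrightarrow> C \<subseteq> G"
  using cyclic_subgroup_subset by (auto simp: maximal_cyclic_subgroup_def)

lemma cyclic_subgroup_conj_by:
  "is_subgroup G \<Longrightarrow> h \<in> G \<Longrightarrow> cyclic_subgroup_of G C \<Longrightarrow> cyclic_subgroup_of G (conj_by h ` C)"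
  unfolding cyclic_subgroup_of_def by (metis conj_by_cyc conj_by_in_subgroup)

lemma maximal_cyclic_subgroup_conj_by:
  assumes G: "is_subgroup G" and h: "h \<in> G" and C: "maximal_cyclic_subgroup G C"
  shows "maximal_cyclic_subgroup G (conj_by h ` C)"
proof -
  have hi: "matrix_inv h \<in> G" using subgroup_matrix_inv[OF G h] .
  have "D = conj_by h ` C" if D: "cyclic_subgroup_of G D" "conj_by h ` C \<subseteq> D" for D
  proof -
    have "C \<subseteq> conj_by (matrix_inv h) ` D"
    proof
      fix c assume "c \<in> C"
      then have "conj_by h c \<in> D" using D(2) by auto
      then show "c \<in> conj_by (matrix_inv h) ` D" using conj_by_inverse_cancel[OF G h, of c] by force
    qed
    moreover have "cyclic_subgroup_of G (conj_by (matrix_inv h) ` D)"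
      using cyclic_subgroup_conj_by[OF G hi D(1)] .
    ultimately have "conj_by (matrix_inv h) ` D = C"
      using C by (auto simp: maximal_cyclic_subgroup_def)
    then show ?thesis
      using conj_by_cancel_inverse[OF G h] by (force simp: image_comp comp_def)
  qed
  then show ?thesis
    using C cyclic_subgroup_conj_by[OF G h] by (auto simp: maximal_cyclic_subgroup_def)
qed

lemma finite_powers_imp_periodic:
  assumes G: "is_subgroup G" and g: "g \<in> G" and fin: "finite (range (mpow g))"
  shows "\<exists>d\<ge>1. mpow g d = mat 1"
proof -
  obtain a b where ab: "mpow g a = mpow g b" "a < b"
    using fin infinite_UNIV_nat finite_imageD[of "mpow g" UNIV] unfolding inj_def
    by (metis linorder_neqE_nat)
  have aI: "mpow g a \<in> Isom_plus" using subgroup_Isom_plus[OF G mpow_in_subgroup[OF G g]] .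
  have "mpow g (b - a) ** mpow g a = mpow g a"
    using mpow_add[of g "b - a" a] ab by simp
  then have "mpow g (b - a) = mpow g a ** matrix_inv (mpow g a)"
    using Isom_plus_matrix_inv(1)[OF aI] by (metis matrix_mul_assoc matrix_mul_rid)
  then show ?thesis using Isom_plus_matrix_inv(1)[OF aI] ab(2) by (intro exI[of _ "b - a"]) simp
qed

lemma fixed_point_imp_one:
  assumes G: "is_subgroup G" and D: "discrete_group G" and T: "torsion_free G"
    and g: "g \<in> G" and p: "p \<in> H3" and fixed: "g *v p = p"
  shows "g = mat 1"
proof -
  have "finite (range (mpow g))"
  proof (rule finite_if_corner_bounded[OF G D])
    show "range (mpow g) \<subseteq> G" using mpow_in_subgroup[OF G g] by auto
    fix A assume "A \<in> range (mpow g)"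
    then show "A$0$0 \<le> 2 * p$0 * p$0"
      using Isom_plus_corner_le[OF subgroup_Isom_plus[OF G mpow_in_subgroup[OF G g]] p]
        mpow_fixed_point[OF fixed] by auto
  qed
  then show ?thesis
    using finite_powers_imp_periodic[OF G g] T g unfolding torsion_free_def by blast
qed

definition cosh_disp :: "real^4^4 \<Rightarrow> real^4 \<Rightarrow> real" where
  "cosh_disp g x = - mink x (g *v x)"

lemma hdist_less_imp_cosh_disp_less:
  assumes x: "x \<in> H3" and g: "g \<in> Isom_plus" and "lam > 0" and "hdist x (g *v x) < lam"
  shows "cosh_disp g x < cosh lam"
proof -
  have "- mink x (g *v x) \<ge> 1" by (rule minus_mink_H3_ge_1[OF x Isom_plus_H3[OF g x]])
  moreover have "arcosh (- mink x (g *v x)) < arcosh (cosh lam)"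
    using assms(3,4) by (simp add: hdist_def arcosh_cosh_real)
  ultimately show ?thesis using cosh_real_ge_1[of lam] by (simp add: cosh_disp_def)
qed

lemma cosh_disp_conj_by:
  "is_subgroup G \<Longrightarrow> h \<in> G \<Longrightarrow> cosh_disp g (h *v x) = cosh_disp (conj_by h g) x"
  by (simp add: cosh_disp_def mink_conj_by)

lemma continuous_on_cosh_disp: "continuous_on K (cosh_disp g)"
proof -
  have "continuous_on K (\<lambda>k. (g *v k) $ i)" for i
    by (intro continuous_on_compose2[of UNIV "\<lambda>v. v $ i" K "\<lambda>k. g *v k"] linear_continuous_on
        bounded_linear_vec_nth matrix_vector_mul_bounded_linear) auto
  then show ?thesis unfolding cosh_disp_def mink_def
    by (intro continuous_intros linear_continuous_on bounded_linear_vec_nth)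
qed

lemma time_le_minus_mink:
  assumes k: "k \<in> H3" and y: "y \<in> H3" shows "y$0 \<le> 2 * k$0 * (- mink k y)"
  using minus_mink_ge_time_ratio[OF k, of y] y H3_time_pos[OF k]
  by (simp add: H3_def divide_le_eq mult.commute mult.left_commute)

lemma compact_time_bounded:
  fixes K :: "(real^4) set"
  assumes "compact K" obtains R where "\<And>k. k \<in> K \<Longrightarrow> \<bar>k$0\<bar> \<le> R"
proof -
  obtain R where "\<forall>k\<in>K. norm k \<le> R" using compact_imp_bounded[OF assms] bounded_iff by blast
  then show ?thesis using that component_le_norm_cart order_trans by blast
qed

text \<open>The corner entry of \<open>g\<close> is controlled by the displacement of any point \<open>k\<close>:
  \<open>g$0$0 \<le> 2 k$0 (g k)$0 \<le> 4 k$0\<^sup>2 cosh_disp g k\<close>.\<close>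

lemma finite_small_cosh_disp:
  assumes G: "is_subgroup G" and D: "discrete_group G" and K: "compact K" "K \<subseteq> H3"
  shows "finite {g \<in> G. \<exists>k\<in>K. cosh_disp g k \<le> beta}"
proof -
  obtain R where R: "\<And>k. k \<in> K \<Longrightarrow> \<bar>k$0\<bar> \<le> R" using compact_time_bounded[OF K(1)] by blast
  show ?thesis
  proof (rule finite_if_corner_bounded[OF G D, where M = "4 * (R * R) * \<bar>beta\<bar>"])
    fix A assume "A \<in> {g \<in> G. \<exists>k\<in>K. cosh_disp g k \<le> beta}"
    then obtain k where A: "A \<in> Isom_plus" and k: "k \<in> K" and kb: "cosh_disp A k \<le> beta"
      using subgroup_Isom_plus[OF G] by auto
    have kH: "k \<in> H3" using k K by auto
    have k0: "0 < k$0" "k$0 \<le> R" using H3_time_pos[OF kH] R[OF k] by auto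
    have "(A *v k)$0 \<le> 2 * k$0 * \<bar>beta\<bar>"
      using time_le_minus_mink[OF kH Isom_plus_H3[OF A kH]] kb k0
      by (smt (verit) cosh_disp_def mult_left_mono mult_pos_pos)
    then have "A$0$0 \<le> 2 * k$0 * (2 * k$0 * \<bar>beta\<bar>)"
      using Isom_plus_corner_le[OF A kH] k0 by (smt (verit) mult_left_mono)
    also have "\<dots> = 4 * (k$0 * k$0) * \<bar>beta\<bar>" by simp
    also have "\<dots> \<le> 4 * (R * R) * \<bar>beta\<bar>"
      using mult_mono[OF k0(2) k0(2)] k0 by (intro mult_right_mono) auto
    finally show "A$0$0 \<le> 4 * (R * R) * \<bar>beta\<bar>" .
  qed auto
qed

text \<open>Translate \<open>x\<close> into \<open>K\<close> by some \<open>h\<close>; the resulting conjugate \<open>conj_by h g\<close> is one of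
  finitely many, and for each of them one fixed conjugator suffices.\<close>

lemma cosh_disp_sublevel_values_on_compact:
  assumes G: "is_subgroup G" and D: "discrete_group G" and g: "g \<in> G"
    and K: "compact K" "K \<subseteq> H3" "(\<Union>h\<in>G. act h ` K) = H3"
  obtains L where "compact L" "L \<subseteq> H3"
    "\<And>x. x \<in> H3 \<Longrightarrow> cosh_disp g x \<le> beta \<Longrightarrow> \<exists>y\<in>L. cosh_disp g y = cosh_disp g x"
proof -
  define small_conjugates where
    "small_conjugates = {d \<in> G. (\<exists>k\<in>K. cosh_disp d k \<le> beta) \<and> (\<exists>h\<in>G. d = conj_by h g)}"
  have fin: "finite small_conjugates"
    by (rule finite_subset[OF _ finite_small_cosh_disp[OF G D K(1,2), of beta]]) (auto simp: small_conjugates_def)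
  define conjugator where "conjugator d = (SOME h. h \<in> G \<and> d = conj_by h g)" for d
  have conjugator: "conjugator d \<in> G \<and> d = conj_by (conjugator d) g" if "d \<in> small_conjugates" for d
    using that unfolding small_conjugates_def conjugator_def by (metis (mono_tags, lifting) mem_Collect_eq someI_ex)
  define L where "L = (\<Union>d\<in>small_conjugates. (\<lambda>k. conjugator d *v k) ` K)"
  show ?thesis
  proof
    show "compact L" unfolding L_def
      using fin K(1) by (intro compact_UN compact_continuous_image linear_continuous_on
          matrix_vector_mul_bounded_linear)
    show "L \<subseteq> H3"
      using conjugator K(2) Isom_plus_H3 subgroup_Isom_plus[OF G] by (force simp: L_def)
    fix x assume x: "x \<in> H3" "cosh_disp g x \<le> beta"
    then obtain h k where hk: "h \<in> G" "k \<in> K" "x = h *v k"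
      using K(3) by (force simp: act_def)
    define d where "d = conj_by h g"
    have disp_d: "cosh_disp d k = cosh_disp g x"
      using cosh_disp_conj_by[OF G hk(1)] hk(3) by (simp add: d_def)
    have "d \<in> G" using conj_by_in_subgroup[OF G hk(1) g] by (simp add: d_def)
    moreover have "\<exists>k\<in>K. cosh_disp d k \<le> beta" using hk(2) x(2) unfolding disp_d[symmetric] by blast
    moreover have "\<exists>h\<in>G. d = conj_by h g" using hk(1) d_def by blast
    ultimately have "d \<in> small_conjugates" by (simp add: small_conjugates_def)
    then have "conjugator d *v k \<in> L" and "cosh_disp g (conjugator d *v k) = cosh_disp d k"
      using conjugator[of d] hk(2) cosh_disp_conj_by[OF G] by (auto simp: L_def)
    then show "\<exists>y\<in>L. cosh_disp g y = cosh_disp g x" using disp_d by metis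
  qed
qed

lemma cosh_disp_attains_min:
  assumes G: "is_subgroup G" and D: "discrete_group G" and CC: "cocompact G" and g: "g \<in> G"
  obtains p where "p \<in> H3" "\<And>x. x \<in> H3 \<Longrightarrow> cosh_disp g p \<le> cosh_disp g x"
proof -
  obtain K where K: "compact K" "K \<subseteq> H3" "(\<Union>h\<in>G. act h ` K) = H3"
    using CC by (auto simp: cocompact_def)
  define beta where "beta = cosh_disp g hyp_origin"
  obtain L where L: "compact L" "L \<subseteq> H3"
    "\<And>x. x \<in> H3 \<Longrightarrow> cosh_disp g x \<le> beta \<Longrightarrow> \<exists>y\<in>L. cosh_disp g y = cosh_disp g x"
    using cosh_disp_sublevel_values_on_compact[OF G D g K] by blast
  obtain y0 where y0: "y0 \<in> L" "cosh_disp g y0 = beta"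
    using L(3)[OF hyp_origin_in_H3] by (auto simp: beta_def)
  obtain p where p: "p \<in> L" "\<And>y. y \<in> L \<Longrightarrow> cosh_disp g p \<le> cosh_disp g y"
    using continuous_attains_inf[OF L(1) _ continuous_on_cosh_disp] y0(1) by blast
  show ?thesis
  proof
    show "p \<in> H3" using p(1) L(2) by blast
    fix x assume x: "x \<in> H3"
    show "cosh_disp g p \<le> cosh_disp g x"
    proof (cases "cosh_disp g x \<le> beta")
      case True then show ?thesis using L(3)[OF x] p(2) by force
    next
      case False then show ?thesis using p(2)[OF y0(1)] y0(2) by linarith
    qed
  qed
qed

lemma time_sq_mult_mink_self_ge:
  assumes p: "p \<in> H3" and v: "mink v p = 0"
  shows "(p$0)^2 * mink v v \<ge> spatial_inner v v"
proof -
  have "(v$0 * p$0)^2 \<le> spatial_inner v v * spatial_inner p p"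
    using spatial_inner_Cauchy_Schwarz[of v p] v by (simp add: mink_eq_spatial_inner)
  then have "(v$0)^2 * (p$0)^2 \<le> spatial_inner v v * (p$0)^2 - spatial_inner v v"
    using spatial_inner_self_H3[OF p] by (simp add: power_mult_distrib algebra_simps)
  then show ?thesis by (simp add: mink_eq_spatial_inner power2_eq_square algebra_simps)
qed

lemma mink_self_nonneg_if_orthogonal:
  assumes p: "p \<in> H3" and v: "mink v p = 0" shows "mink v v \<ge> 0"
proof -
  have "(p$0)^2 * mink v v \<ge> 0"
    using time_sq_mult_mink_self_ge[OF p v] spatial_inner_self_nonneg[of v] by linarith
  moreover have "(p$0)^2 > 0" using H3_time_pos[OF p] by simp
  ultimately show ?thesis by (simp add: zero_le_mult_iff)
qed

lemma orthogonal_nonpos_imp_zero: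
  assumes p: "p \<in> H3" and v: "mink v p = 0" and n: "mink v v \<le> 0"
  shows "v = 0"
proof -
  have "spatial_inner v v \<le> 0"
    using time_sq_mult_mink_self_ge[OF p v] mink_self_nonneg_if_orthogonal[OF p v] n by simp
  moreover have "v$1 * v$1 \<ge> 0" "v$2 * v$2 \<ge> 0" "v$3 * v$3 \<ge> 0" by simp_all
  ultimately have "v$1 * v$1 = 0 \<and> v$2 * v$2 = 0 \<and> v$3 * v$3 = 0"
    unfolding spatial_inner_def by linarith
  then have z: "v$1 = 0" "v$2 = 0" "v$3 = 0" by simp_all
  then have "v$0 * p$0 = 0" using v by (simp add: mink_eq_spatial_inner spatial_inner_def)
  then have "v$0 = 0" using H3_time_pos[OF p] by simp
  then have "v$i = 0" for i using z exhaust_index4[of i] by auto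
  then show ?thesis by (simp add: vec_eq_iff)
qed

lemma H3_eq_if_mink_eq_minus_one:
  assumes x: "x \<in> H3" and y: "y \<in> H3" and m: "mink x y = -1"
  shows "x = y"
proof -
  have xx: "mink x x = -1" and yy: "mink y y = -1" using x y by (simp_all add: H3_def)
  have "mink (x - y) x = 0" and "mink (x - y) (x - y) \<le> 0"
    using xx yy m by (simp_all add: mink_bilinear mink_commute[of y x])
  then have "x - y = 0" by (rule orthogonal_nonpos_imp_zero[OF x])
  then show ?thesis by simp
qed

lemma mink_Cauchy_Schwarz_orthogonal:
  assumes p: "p \<in> H3" and y: "mink y p = 0" and z: "mink z p = 0"
  shows "(mink y z)^2 \<le> mink y y * mink z z"
proof (cases "mink z z = 0")
  case True
  then show ?thesis using orthogonal_nonpos_imp_zero[OF p z] by simp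
next
  case False
  define a where "a = mink y y"
  define b where "b = mink y z"
  define c where "c = mink z z"
  have c: "c > 0" using False mink_self_nonneg_if_orthogonal[OF p z] by (simp add: c_def)
  define t where "t = - b / c"
  have "mink (y + t *\<^sub>R z) p = 0" using y z by (simp add: mink_bilinear)
  then have "mink (y + t *\<^sub>R z) (y + t *\<^sub>R z) \<ge> 0" using mink_self_nonneg_if_orthogonal[OF p] by blast
  then have "a + 2 * t * b + t * t * c \<ge> 0"
    by (simp add: mink_bilinear mink_commute[of z y] a_def b_def c_def algebra_simps)
  then have "a - b * b / c \<ge> 0" using c by (simp add: t_def field_simps power2_eq_square)
  then have "b * b \<le> a * c" using c by (simp add: field_simps)
  then show ?thesis by (simp add: a_def b_def c_def power2_eq_square)
qed

lemma linear_plus_quadratic_nonneg_imp_zero: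
  fixes a b eta :: real
  assumes eta: "eta > 0" and h: "\<And>t. \<bar>t\<bar> < eta \<Longrightarrow> t * a + t^2 * b \<ge> 0"
  shows "a = 0"
proof (rule ccontr)
  assume a: "a \<noteq> 0"
  define tau where "tau = min (eta/2) (\<bar>a\<bar> / (2 * (\<bar>b\<bar> + 1)))"
  have tau: "tau > 0" "tau < eta" using eta a by (simp_all add: tau_def add_nonneg_pos)
  have "tau * (2 * (\<bar>b\<bar> + 1)) \<le> \<bar>a\<bar>"
    using pos_le_divide_eq[of "2 * (\<bar>b\<bar> + 1)" tau "\<bar>a\<bar>"] by (simp add: tau_def add_nonneg_pos)
  then have "2 * (tau * \<bar>b\<bar>) + 2 * tau \<le> \<bar>a\<bar>" by (simp add: algebra_simps)
  then have "tau * (tau * \<bar>b\<bar>) < tau * \<bar>a\<bar>"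
    using tau(1) a by (intro mult_strict_left_mono) auto
  then have small: "tau^2 * \<bar>b\<bar> < tau * \<bar>a\<bar>" by (simp add: power2_eq_square mult.assoc)
  define t where "t = (if a > 0 then - tau else tau)"
  have "t * a = - (tau * \<bar>a\<bar>)" using a by (auto simp: t_def)
  moreover have "t^2 * b \<le> tau^2 * \<bar>b\<bar>" by (auto simp: t_def intro: mult_left_mono)
  moreover have "\<bar>t\<bar> < eta" using tau by (simp add: t_def)
  ultimately show False using h[of t] small by linarith
qed

lemma open_future_cone: "open {y::real^4. mink y y < 0 \<and> y$0 > 0}"
proof -
  have "continuous_on UNIV (\<lambda>y::real^4. mink y y)"
    unfolding mink_def by (intro continuous_intros linear_continuous_on bounded_linear_vec_nth)
  then have "open {y::real^4. mink y y < 0}"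
    using open_Collect_less[OF _ continuous_on_const] by simp
  moreover have "open {y::real^4. 0 < y$0}"
    by (intro open_Collect_less continuous_intros linear_continuous_on bounded_linear_vec_nth)
  ultimately show ?thesis by (simp add: Collect_conj_eq open_Int)
qed

lemma scaleR_future_in_H3:
  assumes "mink y y < 0" "y$0 > 0"
  shows "(1 / sqrt (- mink y y)) *\<^sub>R y \<in> H3"
proof -
  define s where "s = sqrt (- mink y y)"
  have s: "s > 0" and s2: "s^2 = - mink y y" using assms by (simp_all add: s_def)
  have "mink ((1/s) *\<^sub>R y) ((1/s) *\<^sub>R y) = -1"
    using s s2 assms(1) by (simp add: mink_bilinear power2_eq_square field_simps)
  then show ?thesis using s assms by (simp add: H3_def s_def[symmetric])
qed

text \<open>If \<open>p\<close> minimises \<open>cosh_disp g\<close> with minimum \<open>c\<close>, then \<open>R y = -\<langle>y, g y\<rangle> + c \<langle>y, y\<rangle>\<close> is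
  nonnegative on the future cone (by homogeneity) and vanishes at \<open>p\<close>; its derivative at \<open>p\<close> in
  direction \<open>v\<close> is \<open>-\<langle>v, g p + g\<^sup>-\<^sup>1 p - 2 c p\<rangle>\<close>, which must therefore vanish.\<close>

lemma cosh_disp_min_homogeneous:
  assumes p: "\<And>x. x \<in> H3 \<Longrightarrow> cosh_disp g p \<le> cosh_disp g x"
    and y: "mink y y < 0" "y$0 > 0"
  shows "- mink y (g *v y) + cosh_disp g p * mink y y \<ge> 0"
proof -
  define s where "s = sqrt (- mink y y)"
  have s: "s > 0" and s2: "s^2 = - mink y y" using y by (simp_all add: s_def)
  have "cosh_disp g p \<le> cosh_disp g ((1/s) *\<^sub>R y)"
    using p scaleR_future_in_H3[OF y] by (simp add: s_def)
  also have "\<dots> = (1/s)^2 * (- mink y (g *v y))"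
    by (simp add: cosh_disp_def mink_bilinear matrix_vector_mult_scaleR power2_eq_square)
  finally have "cosh_disp g p * s^2 \<le> - mink y (g *v y)"
    using s by (simp add: field_simps power2_eq_square)
  then show ?thesis using s2 by simp
qed

lemma cosh_disp_second_order_expansion:
  fixes c t :: real
  assumes g: "g \<in> Isom_plus"
  defines "R \<equiv> \<lambda>y. - mink y (g *v y) + c * mink y y"
  shows "R (p + t *\<^sub>R v) =
    R p - t * mink v (g *v p + matrix_inv g *v p - (2 * c) *\<^sub>R p) + t^2 * R v"
proof -
  have gv: "g *v (p + t *\<^sub>R v) = g *v p + t *\<^sub>R (g *v v)"
    by (simp add: matrix_vector_right_distrib matrix_vector_mult_scaleR)
  have e1: "mink (p + t *\<^sub>R v) (g *v (p + t *\<^sub>R v)) =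
      mink p (g *v p) + t * mink p (g *v v) + t * mink v (g *v p) + t * t * mink v (g *v v)"
    unfolding gv by (simp only: mink_add_left mink_add_right mink_scaleR_left mink_scaleR_right)
      (simp add: algebra_simps)
  have e2: "mink (p + t *\<^sub>R v) (p + t *\<^sub>R v) = mink p p + 2 * t * mink v p + t * t * mink v v"
    by (simp only: mink_add_left mink_add_right mink_scaleR_left mink_scaleR_right mink_commute[of p v])
      (simp add: algebra_simps)
  have e3: "mink v (g *v p + matrix_inv g *v p - (2 * c) *\<^sub>R p) =
      mink v (g *v p) + mink v (matrix_inv g *v p) - 2 * c * mink v p"
    by (simp only: mink_add_right mink_diff_right mink_scaleR_right)
  have e4: "mink p (g *v v) = mink v (matrix_inv g *v p)"
    using Isom_plus_mink[OF g, of "matrix_inv g *v p" v] Isom_plus_matrix_inv_vec(1)[OF g]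
    by (simp add: mink_commute)
  show ?thesis unfolding R_def e1 e2 e3 e4 by (simp add: algebra_simps power2_eq_square)
qed

lemma cosh_disp_min_axis_equation:
  assumes g: "g \<in> Isom_plus" and p: "p \<in> H3"
    and min: "\<And>x. x \<in> H3 \<Longrightarrow> cosh_disp g p \<le> cosh_disp g x"
  shows "g *v p + matrix_inv g *v p = (2 * cosh_disp g p) *\<^sub>R p"
proof -
  define c where "c = cosh_disp g p"
  define R where "R = (\<lambda>y. - mink y (g *v y) + c * mink y y)"
  define w where "w = g *v p + matrix_inv g *v p - (2 * c) *\<^sub>R p"
  have Rp: "R p = 0" using p by (simp add: R_def c_def cosh_disp_def H3_def)
  obtain e where e: "e > 0" "ball p e \<subseteq> {y::real^4. mink y y < 0 \<and> y$0 > 0}"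
    using open_future_cone p unfolding open_contains_ball by (force simp: H3_def)
  have "mink v w = 0" for v
  proof -
    define eta where "eta = e / (norm v + 1)"
    have nv: "norm v + 1 > 0" by (simp add: add_nonneg_pos)
    have "t * (- mink v w) + t^2 * R v \<ge> 0" if t: "\<bar>t\<bar> < eta" for t
    proof -
      have "norm (t *\<^sub>R v) \<le> \<bar>t\<bar> * (norm v + 1)" by (simp add: mult_left_mono)
      also have "\<dots> < eta * (norm v + 1)" using t nv by (rule mult_strict_right_mono)
      also have "\<dots> = e" using nv by (simp add: eta_def)
      finally have "norm (t *\<^sub>R v) < e" .
      then have "p + t *\<^sub>R v \<in> ball p e" by (simp add: dist_norm)
      then have "R (p + t *\<^sub>R v) \<ge> 0"
        using e(2) cosh_disp_min_homogeneous[OF min] by (auto simp: R_def c_def)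
      then show ?thesis
        using cosh_disp_second_order_expansion[OF g, where c=c and p=p and t=t and v=v] Rp by (simp add: R_def w_def)
    qed
    then show ?thesis
      using linear_plus_quadratic_nonneg_imp_zero[of eta "- mink v w" "R v"] e(1) nv
      by (simp add: eta_def)
  qed
  then have "w = 0" using mink_nondegenerate by blast
  then show ?thesis by (simp add: w_def c_def)
qed

lemma Isom_plus_mink_matrix_inv:
  assumes A: "A \<in> Isom_plus" shows "mink (matrix_inv A *v x) (matrix_inv A *v y) = mink x y"
  using Isom_plus_mink[OF A, of "matrix_inv A *v x" "matrix_inv A *v y"] Isom_plus_matrix_inv_vec(1)[OF A]
  by simp

lemma abs_le_max_one_if_power_eq:
  fixes beta nu :: real
  assumes "m \<ge> 1" and "beta ^ m = nu"
  shows "\<bar>beta\<bar> \<le> max 1 \<bar>nu\<bar>"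
proof (cases "\<bar>beta\<bar> \<le> 1")
  case False
  then have "\<bar>beta\<bar> \<le> \<bar>beta\<bar> ^ m" using assms(1) by (intro self_le_power) auto
  then have "\<bar>beta\<bar> \<le> \<bar>nu\<bar>" using assms(2) by (metis power_abs)
  then show ?thesis by simp
qed simp

lemma mpow_root_commute: "mpow r m = g \<Longrightarrow> r *v (g *v x) = g *v (r *v x)"
  using mpow_commute[of r m] by (auto simp: matrix_vector_mul_assoc)

lemma commute_matrix_inv:
  assumes g: "g \<in> Isom_plus" and rg: "\<And>x. r *v (g *v x) = g *v (r *v x)"
  shows "r *v (matrix_inv g *v x) = matrix_inv g *v (r *v x)"
proof -
  have "g *v (r *v (matrix_inv g *v x)) = r *v x"
    using rg[of "matrix_inv g *v x"] Isom_plus_matrix_inv_vec(1)[OF g] by simp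
  then show ?thesis using Isom_plus_matrix_inv_vec(2)[OF g, of "r *v (matrix_inv g *v x)"] by simp
qed

text \<open>The situation of a point \<open>p\<close> on the axis of a loxodromic \<open>g\<close>, \<open>c = cosh \<ell>\<close>
  for the translation length \<open>\<ell>\<close>. The plane spanned by \<open>p\<close> and \<open>g p\<close> is the axis plane; it contains
  the two light-like eigenvectors of \<open>g\<close>, with eigenvalues \<open>c \<plusminus> s = e\<^sup>\<plusminus>\<^sup>\<ell>\<close>.\<close>

locale loxodromic_axis =
  fixes g :: "real^4^4" and p :: "real^4" and c :: real
  assumes g: "g \<in> Isom_plus" and p: "p \<in> H3" and c_gt_1: "c > 1"
    and mink_p_gp: "mink p (g *v p) = - c"
    and axis_eq: "g *v p + matrix_inv g *v p = (2 * c) *\<^sub>R p"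
begin

abbreviation gp where "gp \<equiv> g *v p"

definition axis_plane :: "real^4 \<Rightarrow> bool" where
  "axis_plane x \<longleftrightarrow> g *v x + matrix_inv g *v x = (2 * c) *\<^sub>R x"

definition s :: real where "s = sqrt (c^2 - 1)"

lemma gp_in_H3: "gp \<in> H3" using Isom_plus_H3[OF g p] .
lemma mink_p_p: "mink p p = -1" using p by (simp add: H3_def)
lemma mink_gp_gp: "mink gp gp = -1" using gp_in_H3 by (simp add: H3_def)
lemma mink_gp_p: "mink gp p = - c" using mink_p_gp mink_commute by metis

lemma matrix_inv_g_p: "matrix_inv g *v p = (2 * c) *\<^sub>R p - gp"
  using axis_eq by (simp add: algebra_simps)

lemma g_gp: "g *v gp = (2 * c) *\<^sub>R gp - p"
proof -
  have "g *v (g *v p + matrix_inv g *v p) = (2 * c) *\<^sub>R gp"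
    using axis_eq by (simp add: matrix_vector_mult_scaleR)
  then show ?thesis
    by (simp add: matrix_vector_right_distrib Isom_plus_matrix_inv_vec(1)[OF g] algebra_simps)
qed

lemma matrix_inv_g_gp: "matrix_inv g *v gp = p"
  using Isom_plus_matrix_inv_vec(2)[OF g] .

lemma axis_plane_lincomb: "axis_plane x \<Longrightarrow> axis_plane y \<Longrightarrow> axis_plane (a *\<^sub>R x + b *\<^sub>R y)"
  by (simp add: axis_plane_def matrix_vector_right_distrib matrix_vector_mult_scaleR
      scaleR_right_distrib[symmetric] algebra_simps)

lemma axis_plane_p: "axis_plane p" using axis_eq by (simp add: axis_plane_def)
lemma axis_plane_gp: "axis_plane gp" by (simp add: axis_plane_def g_gp matrix_inv_g_gp)

lemma c_sq_gt_1: "c * c > 1"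
  using c_gt_1 mult_strict_mono[of 1 c 1 c] by simp

lemma p_gp_independent: "a *\<^sub>R p + b *\<^sub>R gp = 0 \<Longrightarrow> a = 0 \<and> b = 0"
proof -
  assume h: "a *\<^sub>R p + b *\<^sub>R gp = 0"
  then have "mink (a *\<^sub>R p + b *\<^sub>R gp) p = 0" "mink (a *\<^sub>R p + b *\<^sub>R gp) gp = 0" by simp_all
  then have e1: "a + b * c = 0" and e2: "a * c + b = 0"
    by (simp_all add: mink_bilinear mink_p_p mink_gp_gp mink_p_gp mink_gp_p)
  have "b * (c * c - 1) = c * (a + b * c) - (a * c + b)" by (simp add: algebra_simps)
  then have "b * (c * c - 1) = 0" using e1 e2 by simp
  then show ?thesis using c_sq_gt_1 e1 by simp
qed

text \<open>For such \<open>y\<close>, \<open>g y\<close> is again orthogonal to \<open>p\<close> with \<open>\<langle>g y, y\<rangle> = c \<langle>y, y\<rangle>\<close>, contradicting Cauchy-Schwarz in \<open>p\<^sup>\<bottom>\<close> as \<open>c > 1\<close>.\<close>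

lemma axis_plane_orthogonal_imp_zero:
  assumes y: "axis_plane y" and yp: "mink y p = 0" and ygp: "mink y gp = 0"
  shows "y = 0"
proof -
  have "mink (matrix_inv g *v y) y = mink y (g *v y)"
    using Isom_plus_mink[OF g, of "matrix_inv g *v y" y] Isom_plus_matrix_inv_vec(1)[OF g] by simp
  moreover have "mink (g *v y + matrix_inv g *v y) y = 2 * c * mink y y"
    using y by (simp add: axis_plane_def mink_bilinear)
  ultimately have gyy: "mink y (g *v y) = c * mink y y"
    by (simp add: mink_bilinear mink_commute[of y "g *v y"])
  have "mink (g *v y) p = mink (matrix_inv g *v (g *v y)) (matrix_inv g *v p)"
    using Isom_plus_mink_matrix_inv[OF g] by simp
  also have "\<dots> = 0"
    using yp ygp by (simp add: Isom_plus_matrix_inv_vec(2)[OF g] matrix_inv_g_p mink_bilinear)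
  finally have gyp: "mink (g *v y) p = 0" .
  have "(mink y (g *v y))^2 \<le> mink y y * mink y y"
    using mink_Cauchy_Schwarz_orthogonal[OF p yp gyp] Isom_plus_mink[OF g, of y y] by simp
  then have "(mink y y)^2 * (c * c - 1) \<le> 0" using gyy by (simp add: power2_eq_square algebra_simps)
  then have "mink y y = 0" using c_sq_gt_1 by (simp add: mult_le_0_iff)
  then show ?thesis using orthogonal_nonpos_imp_zero[OF p yp] by simp
qed

lemma axis_plane_span:
  assumes x: "axis_plane x" shows "\<exists>a b. x = a *\<^sub>R p + b *\<^sub>R gp"
proof -
  define a where "a = (mink x gp * c - mink x p) / (1 - c * c)"
  define b where "b = - mink x gp - a * c"
  have ha: "a * (1 - c * c) = mink x gp * c - mink x p" using c_sq_gt_1 by (simp add: a_def)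
  define y where "y = x - a *\<^sub>R p - b *\<^sub>R gp"
  have "axis_plane y"
    using axis_plane_lincomb[OF x axis_plane_lincomb[OF axis_plane_p axis_plane_gp, of "- a" "- b"], of 1 1]
    by (simp add: y_def algebra_simps)
  moreover have "mink y p = 0"
    using ha by (simp add: y_def mink_bilinear mink_p_p mink_gp_p b_def algebra_simps)
  moreover have "mink y gp = 0"
    by (simp add: y_def mink_bilinear mink_gp_gp mink_p_gp b_def)
  ultimately have "y = 0" by (rule axis_plane_orthogonal_imp_zero)
  then show ?thesis by (intro exI[of _ a] exI[of _ b]) (simp add: y_def algebra_simps)
qed

lemma eigenvector:
  assumes mu: "mu * mu - 2 * c * mu + 1 = 0"
  shows "g *v (gp - mu *\<^sub>R p) = (2 * c - mu) *\<^sub>R (gp - mu *\<^sub>R p)"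
proof -
  have "(2 * c - mu) * mu = 1" using mu by (simp add: algebra_simps)
  then show ?thesis
    by (simp add: matrix_vector_mult_diff_distrib matrix_vector_mult_scaleR g_gp algebra_simps)
qed

lemma eigenvector_nonzero: "gp - mu *\<^sub>R p \<noteq> 0"
  using p_gp_independent[of "- mu" 1] by (auto simp: algebra_simps)

lemma commuting_preserves_eigenline:
  assumes rg: "\<And>x. r *v (g *v x) = g *v (r *v x)"
    and rgi: "\<And>x. r *v (matrix_inv g *v x) = matrix_inv g *v (r *v x)"
    and mu: "mu * mu - 2 * c * mu + 1 = 0"
  shows "\<exists>\<beta>. r *v (gp - mu *\<^sub>R p) = \<beta> *\<^sub>R (gp - mu *\<^sub>R p)"
proof -
  define n where "n = gp - mu *\<^sub>R p"
  define nu where "nu = 2 * c - mu"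
  have "axis_plane n"
    using axis_plane_lincomb[OF axis_plane_gp axis_plane_p, of 1 "- mu"] by (simp add: n_def)
  have "g *v (r *v n) + matrix_inv g *v (r *v n) = r *v (g *v n + matrix_inv g *v n)"
    by (simp add: rg rgi matrix_vector_right_distrib)
  also have "\<dots> = (2 * c) *\<^sub>R (r *v n)"
    using \<open>axis_plane n\<close> by (simp add: axis_plane_def matrix_vector_mult_scaleR)
  finally have "axis_plane (r *v n)" by (simp add: axis_plane_def)
  then obtain a b where ab: "r *v n = a *\<^sub>R p + b *\<^sub>R gp" using axis_plane_span by blast
  have "g *v (r *v n) = r *v (g *v n)" by (rule rg[symmetric])
  then have "g *v (r *v n) = nu *\<^sub>R (r *v n)"
    using eigenvector[OF mu] by (simp add: matrix_vector_mult_scaleR n_def nu_def)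
  then have "a *\<^sub>R gp + b *\<^sub>R ((2 * c) *\<^sub>R gp - p) = nu *\<^sub>R (a *\<^sub>R p + b *\<^sub>R gp)"
    unfolding ab by (simp add: matrix_vector_right_distrib matrix_vector_mult_scaleR g_gp)
  then have "(- b - nu * a) *\<^sub>R p + (a + 2 * c * b - nu * b) *\<^sub>R gp = 0"
    by (simp add: algebra_simps)
  then have "b = - (nu * a)" using p_gp_independent by fastforce
  moreover have "nu * mu = 1" using mu by (simp add: nu_def algebra_simps)
  ultimately have "r *v n = (- (nu * a)) *\<^sub>R n"
    using ab by (simp add: n_def algebra_simps)
  then show ?thesis unfolding n_def by blast
qed

lemma s_pos: "s > 0" using c_sq_gt_1 by (simp add: s_def power2_eq_square)
lemma s_sq: "s * s = c * c - 1" using c_sq_gt_1 by (simp add: s_def power2_eq_square)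
lemma s_less_c: "s < c"
proof (rule ccontr)
  assume "\<not> s < c"
  then have "c * c \<le> s * s" using c_gt_1 by (intro mult_mono) auto
  then show False using s_sq by simp
qed

lemma eigenvalue_equation:
  assumes "mu = c + s \<or> mu = c - s" shows "mu * mu - 2 * c * mu + 1 = 0"
proof -
  have "mu * mu - 2 * c * mu + 1 = (mu - c) * (mu - c) - s * s" using s_sq by (simp add: algebra_simps)
  then show ?thesis using assms by auto
qed

lemma root_eigenvector:
  assumes rg: "\<And>x. r *v (g *v x) = g *v (r *v x)"
    and rgi: "\<And>x. r *v (matrix_inv g *v x) = matrix_inv g *v (r *v x)"
    and root: "mpow r m = g" "m \<ge> 1" and mu: "mu = c + s \<or> mu = c - s"
  obtains beta where "r *v (gp - mu *\<^sub>R p) = beta *\<^sub>R (gp - mu *\<^sub>R p)" "\<bar>beta\<bar> \<le> c + s"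
proof -
  obtain beta where beta: "r *v (gp - mu *\<^sub>R p) = beta *\<^sub>R (gp - mu *\<^sub>R p)"
    using commuting_preserves_eigenline[OF rg rgi eigenvalue_equation[OF mu]] by blast
  have "(beta ^ m) *\<^sub>R (gp - mu *\<^sub>R p) = (2 * c - mu) *\<^sub>R (gp - mu *\<^sub>R p)"
    using mpow_eigenvector[OF beta, of m] eigenvector[OF eigenvalue_equation[OF mu]] root(1) by metis
  then have "beta ^ m = 2 * c - mu" using eigenvector_nonzero[of mu] by simp
  then have "\<bar>beta\<bar> \<le> max 1 \<bar>2 * c - mu\<bar>" using abs_le_max_one_if_power_eq[OF root(2)] by blast
  moreover have "\<bar>2 * c - mu\<bar> \<le> c + s" "1 \<le> c + s" using mu s_pos s_less_c c_gt_1 by auto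
  ultimately show ?thesis using that[OF beta] by linarith
qed

text \<open>Writing \<open>p\<close> as a difference of the two eigenvectors of \<open>g\<close>, the eigenvalue bounds for a root \<open>r\<close>
  bound \<open>(r p)$0\<close>, and hence the corner entry of \<open>r\<close>, independently of \<open>r\<close>.\<close>

lemma root_corner_le:
  assumes r: "r \<in> Isom_plus" and root: "mpow r m = g" "m \<ge> 1"
  shows "r$0$0 \<le> 2 * p$0 * ((c + s) * (gp$0 + (c + s) * p$0) / s)"
proof -
  note rg = mpow_root_commute[OF root(1)]
  note rgi = commute_matrix_inv[OF g rg]
  define n1 where "n1 = gp - (c + s) *\<^sub>R p"
  define n2 where "n2 = gp - (c - s) *\<^sub>R p"
  obtain b1 where b1: "r *v n1 = b1 *\<^sub>R n1" "\<bar>b1\<bar> \<le> c + s"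
    using root_eigenvector[OF rg rgi root, of "c + s"] n1_def by blast
  obtain b2 where b2: "r *v n2 = b2 *\<^sub>R n2" "\<bar>b2\<bar> \<le> c + s"
    using root_eigenvector[OF rg rgi root, of "c - s"] n2_def by blast
  have "n2 - n1 = (c + s) *\<^sub>R p - (c - s) *\<^sub>R p" by (simp add: n1_def n2_def)
  also have "\<dots> = ((c + s) - (c - s)) *\<^sub>R p" by (rule scaleR_left_diff_distrib[symmetric])
  finally have "n2 - n1 = (2 * s) *\<^sub>R p" by simp
  then have p_eq: "p = (1 / (2 * s)) *\<^sub>R (n2 - n1)" using s_pos by simp
  have "r *v p = (1 / (2 * s)) *\<^sub>R (b2 *\<^sub>R n2 - b1 *\<^sub>R n1)"
    by (subst p_eq) (simp add: matrix_vector_mult_scaleR matrix_vector_mult_diff_distrib b1(1) b2(1))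
  then have rp: "(r *v p)$0 = (b2 * n2$0 - b1 * n1$0) / (2 * s)" by simp
  have p0: "p$0 > 0" and gp0: "gp$0 > 0" using H3_time_pos p gp_in_H3 by auto
  have "0 \<le> (c - s) * p$0" "(c - s) * p$0 \<le> (c + s) * p$0" "0 \<le> (c + s) * p$0"
    using p0 s_pos s_less_c by (auto intro: mult_right_mono)
  moreover have "n1$0 = gp$0 - (c + s) * p$0" "n2$0 = gp$0 - (c - s) * p$0"
    by (simp_all add: n1_def n2_def)
  ultimately have n_bound: "\<bar>n1$0\<bar> \<le> gp$0 + (c + s) * p$0" "\<bar>n2$0\<bar> \<le> gp$0 + (c + s) * p$0"
    using gp0 unfolding abs_le_iff by linarith+
  have bound: "\<bar>b * n\<bar> \<le> (c + s) * (gp$0 + (c + s) * p$0)"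
    if "\<bar>b\<bar> \<le> c + s" "\<bar>n\<bar> \<le> gp$0 + (c + s) * p$0" for b n
    unfolding abs_mult using that by (intro mult_mono) auto
  have "b2 * n2$0 \<le> (c + s) * (gp$0 + (c + s) * p$0)"
    using bound[OF b2(2) n_bound(2)] by (simp add: abs_le_iff)
  moreover have "- (b1 * n1$0) \<le> (c + s) * (gp$0 + (c + s) * p$0)"
    using bound[OF b1(2) n_bound(1)] by (simp add: abs_le_iff)
  ultimately have "(b2 * n2$0 - b1 * n1$0) / (2 * s) \<le> 2 * ((c + s) * (gp$0 + (c + s) * p$0)) / (2 * s)"
    using s_pos by (intro divide_right_mono) auto
  then have "(r *v p)$0 \<le> (c + s) * (gp$0 + (c + s) * p$0) / s" unfolding rp by simp
  then have "2 * p$0 * (r *v p)$0 \<le> 2 * p$0 * ((c + s) * (gp$0 + (c + s) * p$0) / s)"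
    using p0 by (intro mult_left_mono) auto
  then show ?thesis using Isom_plus_corner_le[OF r p] by linarith
qed

end

lemma finite_roots:
  assumes G: "is_subgroup G" and D: "discrete_group G" and CC: "cocompact G" and T: "torsion_free G"
    and g: "g \<in> G" and g1: "g \<noteq> mat 1"
  shows "finite {r \<in> G. \<exists>m\<ge>1. mpow r m = g}"
proof -
  have gI: "g \<in> Isom_plus" using subgroup_Isom_plus[OF G g] .
  obtain p where p: "p \<in> H3" and min: "\<And>x. x \<in> H3 \<Longrightarrow> cosh_disp g p \<le> cosh_disp g x"
    using cosh_disp_attains_min[OF G D CC g] by blast
  define c where "c = cosh_disp g p"
  have "c \<ge> 1" using minus_mink_H3_ge_1[OF p Isom_plus_H3[OF gI p]] by (simp add: c_def cosh_disp_def)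
  moreover have "c \<noteq> 1"
  proof
    assume "c = 1"
    then have "p = g *v p"
      using H3_eq_if_mink_eq_minus_one[OF p Isom_plus_H3[OF gI p]] by (simp add: c_def cosh_disp_def)
    then show False using fixed_point_imp_one[OF G D T g p] g1 by simp
  qed
  ultimately interpret loxodromic_axis g p c
    using gI p cosh_disp_min_axis_equation[OF gI p min] by unfold_locales (simp_all add: c_def cosh_disp_def)
  show ?thesis
  proof (rule finite_if_corner_bounded[OF G D])
    fix r assume "r \<in> {r \<in> G. \<exists>m\<ge>1. mpow r m = g}"
    then show "r$0$0 \<le> 2 * p$0 * ((c + s) * (gp$0 + (c + s) * p$0) / s)"
      using root_corner_le subgroup_Isom_plus[OF G] by blast
  qed blast
qed

definition maximal_cyclics_containing :: "(real^4^4) set \<Rightarrow> real^4^4 \<Rightarrow> (real^4^4) set set" where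
  "maximal_cyclics_containing G d = {C. maximal_cyclic_subgroup G C \<and> d \<in> C}"

text \<open>A maximal cyclic subgroup \<open>cyc r\<close> containing \<open>g \<noteq> 1\<close> is generated by a root of \<open>g\<close> or by
  the inverse of one.\<close>

lemma finite_maximal_cyclics_containing:
  assumes G: "is_subgroup G" and D: "discrete_group G" and CC: "cocompact G" and T: "torsion_free G"
    and g: "g \<in> G" and g1: "g \<noteq> mat 1"
  shows "finite (maximal_cyclics_containing G g)"
proof -
  define roots where "roots = {r \<in> G. \<exists>m\<ge>1. mpow r m = g}"
  have "maximal_cyclics_containing G g \<subseteq> cyc ` (roots \<union> matrix_inv ` roots)"
  proof
    fix C assume "C \<in> maximal_cyclics_containing G g"
    then obtain r j where r: "r \<in> G" "C = cyc r" and j: "g = zpow r j"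
      by (auto simp: maximal_cyclics_containing_def maximal_cyclic_subgroup_def
          cyclic_subgroup_of_def cyc_def)
    show "C \<in> cyc ` (roots \<union> matrix_inv ` roots)"
    proof (cases "j \<ge> 0")
      case True
      then have "mpow r (nat j) = g" using j by (simp add: zpow_def)
      moreover from this have "nat j \<ge> 1" using g1 by (metis less_one mpow_0 not_le)
      ultimately have "r \<in> roots" using r(1) unfolding roots_def by blast
      then show ?thesis using r(2) by blast
    next
      case False
      then have "mpow (matrix_inv r) (nat (- j)) = g" using j by (simp add: zpow_def)
      moreover from this have "nat (- j) \<ge> 1" using g1 by (metis less_one mpow_0 not_le)
      ultimately have "matrix_inv r \<in> roots"
        using subgroup_matrix_inv[OF G r(1)] unfolding roots_def by blast
      then have "r \<in> matrix_inv ` roots"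
        using subgroup_matrix_inv_matrix_inv[OF G r(1)] by force
      then show ?thesis using r(2) by blast
    qed
  qed
  moreover have "finite roots" using finite_roots[OF G D CC T g g1] by (simp add: roots_def)
  ultimately show ?thesis by (meson finite_Un finite_imageI finite_subset)
qed

lemma conj_by_short_cyclic:
  assumes G: "is_subgroup G" and lam: "lam > 0" and C: "C \<in> short_cyclics G lam"
    and h: "h \<in> G" and x: "h *v k \<in> Zcyc lam C"
  obtains d where "d \<in> G" "d \<noteq> mat 1" "cosh_disp d k \<le> cosh lam"
    "conj_by h ` C \<in> maximal_cyclics_containing G d"
proof -
  have Cm: "maximal_cyclic_subgroup G C" using C by (simp add: short_cyclics_def)
  obtain e where e: "e \<in> C" "e \<noteq> mat 1" "h *v k \<in> Zel lam e"
    using x by (auto simp: Zcyc_def)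
  have eG: "e \<in> G" using e(1) maximal_cyclic_subgroup_subset[OF G Cm] by blast
  have "cosh_disp e (h *v k) < cosh lam"
    using e(3) hdist_less_imp_cosh_disp_less[OF _ subgroup_Isom_plus[OF G eG] lam]
    by (simp add: Zel_def act_def)
  then have "cosh_disp (conj_by h e) k \<le> cosh lam" using cosh_disp_conj_by[OF G h] by simp
  moreover have "conj_by h e \<noteq> mat 1"
    using e(2) conj_by_inverse_cancel[OF G h, of e] conj_by_one[OF G subgroup_matrix_inv[OF G h]] by metis
  moreover have "conj_by h ` C \<in> maximal_cyclics_containing G (conj_by h e)"
    using maximal_cyclic_subgroup_conj_by[OF G h Cm] e(1) by (simp add: maximal_cyclics_containing_def)
  ultimately show ?thesis using that conj_by_in_subgroup[OF G h eG] by blast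
qed

lemma nerve_simplex_card_le:
  assumes G: "is_subgroup G" and lam: "lam > 0" and K: "(\<Union>h\<in>G. act h ` K) = H3"
    and S: "S \<in> nerve (Zcyc lam) (short_cyclics G lam)"
    and U: "finite U"
    "\<And>d. d \<in> G \<Longrightarrow> d \<noteq> mat 1 \<Longrightarrow> (\<exists>k\<in>K. cosh_disp d k \<le> cosh lam) \<Longrightarrow>
      maximal_cyclics_containing G d \<subseteq> U"
  shows "card S \<le> card U"
proof -
  have S_sub: "S \<subseteq> short_cyclics G lam" and "S \<noteq> {}" and "(\<Inter>C\<in>S. Zcyc lam C) \<noteq> {}"
    using S by (auto simp: nerve_def)
  then obtain x where x: "\<And>C. C \<in> S \<Longrightarrow> x \<in> Zcyc lam C" by blast
  have "x \<in> H3" using x \<open>S \<noteq> {}\<close> by (auto simp: Zcyc_def Zel_def)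
  then obtain h k where hk: "h \<in> G" "k \<in> K" "x = h *v k" using K by (force simp: act_def)
  have "conj_by h ` C \<in> U" if "C \<in> S" for C
    using conj_by_short_cyclic[OF G lam _ hk(1), of C k] x[OF that] S_sub that hk U(2) by blast
  then have "image (conj_by h) ` S \<subseteq> U" by auto
  moreover have "inj_on (image (conj_by h)) S"
    using inj_conj_by[OF G hk(1)] by (meson inj_image_eq_iff inj_onI)
  ultimately show ?thesis using card_inj_on_le[OF _ _ U(1)] by blast
qed

theorem proposition2p12:
  fixes \<Gamma> :: "(real^4^4) set" and lam :: real
  assumes "is_subgroup \<Gamma>" and "discrete_group \<Gamma>" and "cocompact \<Gamma>" and "torsion_free \<Gamma>"
    and "lam > 0"
    and "(\<Union>C\<in>short_cyclics \<Gamma> lam. Zcyc lam C) = H3"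
  shows "finite_dimensional (nerve (Zcyc lam) (short_cyclics \<Gamma> lam))"
proof -
  note G = assms(1-4)
  obtain K where K: "compact K" "K \<subseteq> H3" "(\<Union>h\<in>\<Gamma>. act h ` K) = H3"
    using assms(3) by (auto simp: cocompact_def)
  define U where "U = (\<Union>d\<in>{d \<in> \<Gamma>. \<exists>k\<in>K. cosh_disp d k \<le> cosh lam} - {mat 1}.
      maximal_cyclics_containing \<Gamma> d)"
  have "finite U"
    unfolding U_def using finite_small_cosh_disp[OF G(1,2) K(1,2)]
    by (intro finite_UN_I) (auto intro: finite_maximal_cyclics_containing[OF G])
  then have "card S \<le> card U" if "S \<in> nerve (Zcyc lam) (short_cyclics \<Gamma> lam)" for S
    using nerve_simplex_card_le[OF G(1) assms(5) K(3) that] by (auto simp: U_def)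
  then show ?thesis unfolding finite_dimensional_def by (metis le_add1 order_trans)
qed

end
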